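(* Let $G$ be a finite transitive permutation group on a finite set $\Omega$ such that ${\bf O}_2(G)=1$ and such that the point stabiliser $G_\omega$ (for $\omega\in\Omega$) is a $2$-group. Then $\mathrm{mindeg}_\Omega(G)\ge 2|\Omega|/3$.
   Context: ${\bf O}_2(G)$ denotes the largest normal $2$-subgroup of $G$. For $g\in G$, $\mathrm{Fix}_\Omega(g)=\{\omega\in\Omega\mid \omega^g=\omega\}$ and $\mathrm{supp}_\Omega(g)=\Omega\setminus\mathrm{Fix}_\Omega(g)$. The minimal degree is $\mathrm{mindeg}_\Omega(G)=\min_{g\in G\setminus\{1\}}|\mathrm{supp}_\Omega(g)|$. *)

theory Defs
  imports "HOL-Algebra.Algebra"
begin

definition perm_grp :: "'a set \<Rightarrow> ('a \<Rightarrow> 'a) set \<Rightarrow> ('a \<Rightarrow> 'a) monoid" where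
  "perm_grp \<Omega> H = (BijGroup \<Omega>)\<lparr>carrier := H\<rparr>"

definition is_perm_group :: "'a set \<Rightarrow> ('a \<Rightarrow> 'a) set \<Rightarrow> bool" where
  "is_perm_group \<Omega> H \<longleftrightarrow> subgroup H (BijGroup \<Omega>)"

definition transitive_on :: "'a set \<Rightarrow> ('a \<Rightarrow> 'a) set \<Rightarrow> bool" where
  "transitive_on \<Omega> H \<longleftrightarrow> \<Omega> \<noteq> {} \<and> (\<forall>\<alpha>\<in>\<Omega>. \<forall>\<beta>\<in>\<Omega>. \<exists>g\<in>H. g \<alpha> = \<beta>)"

definition p_subgroup :: "('g, 'b) monoid_scheme \<Rightarrow> nat \<Rightarrow> 'g set \<Rightarrow> bool" where
  "p_subgroup G p N \<longleftrightarrow> subgroup N G \<and> finite N \<and> (\<exists>k. card N = p ^ k)"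

text \<open>O_2(G): the largest normal 2-subgroup, i.e. the subgroup generated by all normal
  2-subgroups.\<close>
definition O2 :: "('g, 'b) monoid_scheme \<Rightarrow> 'g set" where
  "O2 G = generate G (\<Union>{N. N \<lhd> G \<and> p_subgroup G 2 N})"

definition stabiliser :: "('a \<Rightarrow> 'a) set \<Rightarrow> 'a \<Rightarrow> ('a \<Rightarrow> 'a) set" where
  "stabiliser H \<omega> = {g \<in> H. g \<omega> = \<omega>}"

definition supp :: "'a set \<Rightarrow> ('a \<Rightarrow> 'a) \<Rightarrow> 'a set" where
  "supp \<Omega> g = {x \<in> \<Omega>. g x \<noteq> x}"

end

(*
  Let g be a non-identity element fixing some point. Its stabiliser is a 2-group, so a suitable
  power t of g is an involution, and Fix(g) is contained in Fix(t). As O_2(G) = 1, the Baer-Suzuki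
  theorem yields conjugates a, b of t such that <a, b> is not a 2-group; since <a, b> is dihedral,
  this means that c = a b does not have 2-power order. Because point stabilisers are 2-groups, no
  power c^(2^j) with j >= 1 fixes a point. The involutions a, a c^2 and a c^4 are conjugate to t
  (a c^(2n) is a conjugated by c^n), and a point fixed by both a c^m and a c^n is fixed by c^(n-m).
  Hence they have pairwise disjoint fixed point sets, each of size |Fix(t)|, and
  3 |Fix(g)| <= |Omega|.

  The Baer-Suzuki theorem is proved in the relative form: if D is a normal subset of H and K a
  normal p-subgroup of H such that <a, b, K> is a p-group for all a, b in D, then <D, K> is a
  p-group. The induction on |H| - |K| considers two distinct maximal p-subgroups of the form
  <E, K>, E a subset of D, whose intersection with D is largest: the subgroup I generated by this
  intersection and K is either normal in H, and then replaces K, or its normaliser in H is a smaller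
  instance, which contradicts the choice of the pair.
*)

theory Submission
  imports Defs
begin

context group
begin

lemma inv_mult_cancel_left [simp]: "x \<in> carrier G \<Longrightarrow> y \<in> carrier G \<Longrightarrow> inv x \<otimes> (x \<otimes> y) = y"
  by (simp add: m_assoc[symmetric])

lemma mult_inv_cancel_left [simp]: "x \<in> carrier G \<Longrightarrow> y \<in> carrier G \<Longrightarrow> x \<otimes> (inv x \<otimes> y) = y"
  by (simp add: m_assoc[symmetric])

lemma subset_generate: "S \<subseteq> generate G S"
  by (rule subsetI) (rule generate.incl)

lemma generate_Un_one:
  assumes "S \<subseteq> carrier G" shows "generate G (S \<union> {\<one>}) = generate G S"
proof
  have "\<one> \<in> generate G S" by (rule generate.one)
  then have "S \<union> {\<one>} \<subseteq> generate G S" using subset_generate[of S] by blast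
  then show "generate G (S \<union> {\<one>}) \<subseteq> generate G S"
    using generate_is_subgroup[OF assms] by (rule generate_subgroup_incl)
  show "generate G S \<subseteq> generate G (S \<union> {\<one>})" using assms by (intro mono_generate) auto
qed

lemma generate_eq_generate_Int_Un:
  assumes "A \<subseteq> Y" "Y \<subseteq> carrier G" "K \<subseteq> carrier G"
  shows "generate G (A \<union> K) = generate G ((Y \<inter> generate G (A \<union> K)) \<union> K)"
proof
  have "A \<subseteq> generate G (A \<union> K)" using subset_generate[of "A \<union> K"] by blast
  then have "A \<subseteq> Y \<inter> generate G (A \<union> K)" using assms(1) by blast
  then show "generate G (A \<union> K) \<subseteq> generate G ((Y \<inter> generate G (A \<union> K)) \<union> K)"
    using assms(2,3) by (intro mono_generate) auto
  have "K \<subseteq> generate G (A \<union> K)" using subset_generate[of "A \<union> K"] by blast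
  then have "(Y \<inter> generate G (A \<union> K)) \<union> K \<subseteq> generate G (A \<union> K)" by blast
  moreover have "subgroup (generate G (A \<union> K)) G" using assms by (intro generate_is_subgroup) blast
  ultimately show "generate G ((Y \<inter> generate G (A \<union> K)) \<union> K) \<subseteq> generate G (A \<union> K)"
    by (rule generate_subgroup_incl)
qed

lemma conj_nat_pow:
  assumes "g \<in> carrier G" "x \<in> carrier G"
  shows "g \<otimes> x [^] (n::nat) \<otimes> inv g = (g \<otimes> x \<otimes> inv g) [^] n"
proof (induction n)
  case 0
  then show ?case using assms by simp
next
  case (Suc n)
  have "g \<otimes> x [^] Suc n \<otimes> inv g = (g \<otimes> x [^] n \<otimes> inv g) \<otimes> (g \<otimes> x \<otimes> inv g)"
    using assms by (simp add: m_assoc)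
  then show ?case using Suc assms by simp
qed

lemma subgroup_card_dvd:
  assumes "subgroup A G" "subgroup B G" "A \<subseteq> B"
  shows "card A dvd card B"
proof -
  interpret B: group "G\<lparr>carrier := B\<rparr>" using assms(2) by (rule subgroup_imp_group)
  have "subgroup A (G\<lparr>carrier := B\<rparr>)" using assms by (rule subgroup_incl)
  then have "card (rcosets\<^bsub>G\<lparr>carrier := B\<rparr>\<^esub> A) * card A = card B"
    using B.lagrange by (simp add: order_def)
  then show ?thesis by (metis dvd_triv_right)
qed

lemma subgroup_pow_card_eq_one:
  assumes "subgroup S G" "u \<in> S"
  shows "u [^] card S = \<one>"
proof -
  interpret S: group "G\<lparr>carrier := S\<rparr>" using assms(1) by (rule subgroup_imp_group)
  have "u [^]\<^bsub>G\<lparr>carrier := S\<rparr>\<^esub> order (G\<lparr>carrier := S\<rparr>) = \<one>\<^bsub>G\<lparr>carrier := S\<rparr>\<^esub>"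
    using assms(2) by (intro S.pow_order_eq_1) simp
  then show ?thesis unfolding order_def by (simp add: nat_pow_consistent[symmetric])
qed

end

section \<open>Conjugation-invariant sets\<close>

definition conj_invariant :: "('a, 'b) monoid_scheme \<Rightarrow> 'a set \<Rightarrow> 'a set \<Rightarrow> bool" where
  "conj_invariant G S A \<longleftrightarrow> (\<forall>g\<in>S. \<forall>x\<in>A. g \<otimes>\<^bsub>G\<^esub> x \<otimes>\<^bsub>G\<^esub> inv\<^bsub>G\<^esub> g \<in> A)"

context group
begin

lemma conj_invariant_subset: "conj_invariant G S A \<Longrightarrow> S' \<subseteq> S \<Longrightarrow> conj_invariant G S' A"
  unfolding conj_invariant_def by blast

lemma subgroup_conj_invariant_self:
  assumes "subgroup S G" shows "conj_invariant G S S"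
  using assms unfolding conj_invariant_def by (meson subgroup.m_closed subgroup.m_inv_closed)

lemma conj_invariant_Int:
  "conj_invariant G S A \<Longrightarrow> conj_invariant G S Y \<Longrightarrow> conj_invariant G S (A \<inter> Y)"
  unfolding conj_invariant_def by blast

lemma conj_invariant_Un:
  "conj_invariant G S A \<Longrightarrow> conj_invariant G S Y \<Longrightarrow> conj_invariant G S (A \<union> Y)"
  unfolding conj_invariant_def by blast

lemma conj_invariant_Int_subgroup:
  assumes "conj_invariant G H D" "subgroup Q G" "Q \<subseteq> H"
  shows "conj_invariant G Q (D \<inter> Q)"
  using conj_invariant_subset[OF assms(1,3)] subgroup_conj_invariant_self[OF assms(2)]
  by (rule conj_invariant_Int)

lemma conj_generate_in_subgroup:
  assumes "S \<subseteq> carrier G" "subgroup J G" "g \<in> carrier G"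
    and "\<And>s. s \<in> S \<Longrightarrow> g \<otimes> s \<otimes> inv g \<in> J"
    and "x \<in> generate G S"
  shows "g \<otimes> x \<otimes> inv g \<in> J"
  using assms(5)
proof (induction x rule: generate.induct)
  case one
  then show ?case using assms(2,3) subgroup.one_closed by fastforce
next
  case (incl h)
  then show ?case by (rule assms(4))
next
  case (inv h)
  then have "h \<in> carrier G" using assms(1) by blast
  then have "g \<otimes> inv h \<otimes> inv g = inv (g \<otimes> h \<otimes> inv g)"
    using assms(3) by (simp add: inv_mult_group m_assoc)
  then show ?case using assms(2,4) inv subgroup.m_inv_closed by fastforce
next
  case (eng h1 h2)
  have "h1 \<in> carrier G" "h2 \<in> carrier G" using eng(1,2) generate_in_carrier[OF assms(1)] by auto
  then have "g \<otimes> (h1 \<otimes> h2) \<otimes> inv g = (g \<otimes> h1 \<otimes> inv g) \<otimes> (g \<otimes> h2 \<otimes> inv g)"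
    using assms(3) by (simp add: m_assoc)
  then show ?case using assms(2) eng(3,4) subgroup.m_closed by fastforce
qed

lemma conj_invariant_generate:
  assumes "S \<subseteq> carrier G" "A \<subseteq> carrier G" "conj_invariant G S A"
  shows "conj_invariant G S (generate G A)"
  unfolding conj_invariant_def
proof (intro ballI)
  fix g x assume "g \<in> S" "x \<in> generate G A"
  then show "g \<otimes> x \<otimes> inv g \<in> generate G A"
    using assms conj_generate_in_subgroup[OF assms(2) generate_is_subgroup[OF assms(2)]]
    unfolding conj_invariant_def by (meson generate.incl subsetD)
qed

lemma generator_outside_normal_subgroup:
  assumes "Y \<subseteq> P" "P = generate G (Y \<union> K)"
    and "subgroup I G" "K \<subseteq> I" "I \<subseteq> P" "I \<noteq> P" "conj_invariant G P I"
  shows "\<exists>x\<in>Y - I. conj_invariant G {x} I"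
proof -
  have "\<not> Y \<subseteq> I"
  proof
    assume "Y \<subseteq> I"
    then have "generate G (Y \<union> K) \<subseteq> I" using assms(3,4) by (intro generate_subgroup_incl) auto
    then show False using assms(2,5,6) by blast
  qed
  then obtain x where "x \<in> Y - I" by blast
  moreover have "x \<in> P" using calculation assms(1) by blast
  ultimately show ?thesis using conj_invariant_subset[OF assms(7)] by blast
qed

lemma conj_invariant_inv:
  assumes "finite M" "M \<subseteq> carrier G" "g \<in> carrier G" "conj_invariant G {g} M"
  shows "conj_invariant G {inv g} M"
  unfolding conj_invariant_def
proof (intro ballI)
  fix g' m assume g': "g' \<in> {inv g}" and m: "m \<in> M"
  let ?c = "\<lambda>x. g \<otimes> x \<otimes> inv g"
  have "inj_on ?c M"
    using assms(2,3) by (intro inj_onI) (simp add: subset_iff)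
  moreover have "?c ` M \<subseteq> M" using assms(4) unfolding conj_invariant_def by blast
  ultimately have "?c ` M = M" using assms(1) by (simp add: endo_inj_surj)
  then have "m \<in> ?c ` M" using m by simp
  then obtain m' where m': "m' \<in> M" "m = g \<otimes> m' \<otimes> inv g" by blast
  then have "m' \<in> carrier G" using assms(2) by blast
  then have "inv g \<otimes> (g \<otimes> m' \<otimes> inv g) \<otimes> inv (inv g) = m'" using assms(3) by (simp add: m_assoc)
  then show "g' \<otimes> m \<otimes> inv g' \<in> M" using g' m' by simp
qed

lemma subgroup_normalizing_elements:
  assumes P: "subgroup P G" and M: "subgroup M G" "finite M"
  shows "subgroup {g \<in> P. conj_invariant G {g} M} G"
proof (rule subgroupI)
  have carr: "P \<subseteq> carrier G" "M \<subseteq> carrier G" using P M subgroup.subset by auto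
  then show "{g \<in> P. conj_invariant G {g} M} \<subseteq> carrier G" by blast
  have "conj_invariant G {\<one>} M" using carr unfolding conj_invariant_def by (simp add: subset_iff)
  then show "{g \<in> P. conj_invariant G {g} M} \<noteq> {}" using subgroup.one_closed[OF P] by blast
  show "inv g \<in> {g \<in> P. conj_invariant G {g} M}" if g: "g \<in> {g \<in> P. conj_invariant G {g} M}" for g
  proof -
    have "g \<in> P" "g \<in> carrier G" "conj_invariant G {g} M" using g carr by auto
    then show ?thesis using conj_invariant_inv[OF M(2) carr(2)] subgroup.m_inv_closed[OF P] by simp
  qed
  show "g \<otimes> h \<in> {g \<in> P. conj_invariant G {g} M}"
    if g: "g \<in> {g \<in> P. conj_invariant G {g} M}" and h: "h \<in> {g \<in> P. conj_invariant G {g} M}" for g h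
  proof -
    have gh: "g \<in> P" "h \<in> P" "g \<in> carrier G" "h \<in> carrier G" using g h carr by auto
    have "g \<otimes> h \<otimes> m \<otimes> inv (g \<otimes> h) \<in> M" if m: "m \<in> M" for m
    proof -
      have "m \<in> carrier G" using m carr by blast
      then have "g \<otimes> h \<otimes> m \<otimes> inv (g \<otimes> h) = g \<otimes> (h \<otimes> m \<otimes> inv h) \<otimes> inv g"
        using gh by (simp add: inv_mult_group m_assoc)
      moreover have "h \<otimes> m \<otimes> inv h \<in> M" using h m unfolding conj_invariant_def by simp
      ultimately show ?thesis using g unfolding conj_invariant_def by simp
    qed
    then show ?thesis using gh subgroup.m_closed[OF P] unfolding conj_invariant_def by simp
  qed
qed

lemma conj_r_coset:
  assumes "subgroup M G" "h \<in> M" "g \<in> carrier G"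
  shows "h <# (M #> g) #> inv h = M #> (g \<otimes> inv h)"
proof -
  have "h \<in> carrier G" "M \<subseteq> carrier G" using assms subgroup.subset by auto
  then show ?thesis
    using assms by (simp add: coset_assoc coset_join3 coset_mult_assoc)
qed

lemma fixed_r_coset_imp_conj_invariant:
  assumes M: "subgroup M G" and g: "g \<in> carrier G"
    and fixed: "\<And>h. h \<in> M \<Longrightarrow> M #> (g \<otimes> inv h) = M #> g"
  shows "conj_invariant G {g} M"
  unfolding conj_invariant_def
proof (intro ballI)
  fix g' m assume "g' \<in> {g}" "m \<in> M"
  then have m: "g' = g" "m \<in> carrier G" "inv m \<in> M" using M subgroup.subset subgroup.m_inv_closed by auto
  have "g \<otimes> m \<in> M #> (g \<otimes> m)" using M g m by (intro rcos_self) auto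
  then have "g \<otimes> m \<in> M #> g" using fixed[OF m(3)] m by simp
  then have "g \<otimes> m \<otimes> inv g \<in> M" using subgroup.rcos_module_imp[OF M is_group] g m by blast
  then show "g' \<otimes> m \<otimes> inv g' \<in> M" using m by simp
qed

end

section \<open>Products of subgroups\<close>

lemma card_eq_card_fibre_times_card_image:
  assumes "finite A" "\<And>y. y \<in> f ` A \<Longrightarrow> card {x \<in> A. f x = y} = k"
  shows "card A = k * card (f ` A)"
proof -
  have "card A = (\<Sum>y\<in>f ` A. card {x \<in> A. f x = y})"
    using sum.image_gen[OF assms(1), of "\<lambda>_. 1" f] by (simp only: card_eq_sum)
  also have "\<dots> = k * card (f ` A)" using assms(2) by simp
  finally show ?thesis .
qed

context group
begin

lemma bij_betw_set_mult_fibre: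
  assumes A: "subgroup A G" and B: "subgroup B G" and ab0: "a0 \<in> A" "b0 \<in> B"
  shows "bij_betw (\<lambda>k. (a0 \<otimes> k, inv k \<otimes> b0)) (A \<inter> B) {(a, b) \<in> A \<times> B. a \<otimes> b = a0 \<otimes> b0}"
proof (rule bij_betw_imageI)
  have carr: "A \<subseteq> carrier G" "B \<subseteq> carrier G" using A B subgroup.subset by auto
  show "inj_on (\<lambda>k. (a0 \<otimes> k, inv k \<otimes> b0)) (A \<inter> B)"
    using ab0 carr by (intro inj_onI) (simp add: subset_iff)
  show "(\<lambda>k. (a0 \<otimes> k, inv k \<otimes> b0)) ` (A \<inter> B) = {(a, b) \<in> A \<times> B. a \<otimes> b = a0 \<otimes> b0}"
  proof (intro equalityI subsetI)
    fix x assume "x \<in> (\<lambda>k. (a0 \<otimes> k, inv k \<otimes> b0)) ` (A \<inter> B)"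
    then obtain k where "k \<in> A" "k \<in> B" "x = (a0 \<otimes> k, inv k \<otimes> b0)" by blast
    moreover have "a0 \<otimes> k \<otimes> (inv k \<otimes> b0) = a0 \<otimes> b0"
      using calculation ab0 carr by (simp add: m_assoc subset_iff)
    ultimately show "x \<in> {(a, b) \<in> A \<times> B. a \<otimes> b = a0 \<otimes> b0}"
      using A B ab0 by (auto intro: subgroup.m_closed subgroup.m_inv_closed)
  next
    fix x assume "x \<in> {(a, b) \<in> A \<times> B. a \<otimes> b = a0 \<otimes> b0}"
    then obtain a b where x: "x = (a, b)" "a \<in> A" "b \<in> B" "a \<otimes> b = a0 \<otimes> b0" by blast
    define k where "k = inv a0 \<otimes> a"
    have ac: "a \<in> carrier G" "b \<in> carrier G" "a0 \<in> carrier G" "b0 \<in> carrier G"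
      using x ab0 carr by auto
    have "k \<in> A" using A x ab0 unfolding k_def by (auto intro: subgroup.m_closed subgroup.m_inv_closed)
    have "k = b0 \<otimes> inv b"
      using x(4) ac unfolding k_def by (metis inv_solve_left' inv_solve_right' m_assoc m_closed inv_closed)
    then have "k \<in> B" using B x ab0 by (auto intro: subgroup.m_closed subgroup.m_inv_closed)
    have "a0 \<otimes> k = a" unfolding k_def using ac by simp
    moreover have "inv k \<otimes> b0 = b"
      using ac \<open>k = b0 \<otimes> inv b\<close> by (simp add: inv_mult_group m_assoc)
    ultimately have "x = (a0 \<otimes> k, inv k \<otimes> b0)" using x(1) by simp
    with \<open>k \<in> A\<close> \<open>k \<in> B\<close> show "x \<in> (\<lambda>k. (a0 \<otimes> k, inv k \<otimes> b0)) ` (A \<inter> B)" by blast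
  qed
qed

lemma card_set_mult:
  assumes "subgroup A G" "subgroup B G" "finite A" "finite B"
  shows "card (A <#> B) * card (A \<inter> B) = card A * card B"
proof -
  let ?f = "\<lambda>(a, b). a \<otimes> b"
  have image: "?f ` (A \<times> B) = A <#> B" unfolding set_mult_def by auto
  have "card {x \<in> A \<times> B. ?f x = y} = card (A \<inter> B)" if y: "y \<in> A <#> B" for y
  proof -
    obtain a0 b0 where ab0: "a0 \<in> A" "b0 \<in> B" "y = a0 \<otimes> b0" using y unfolding set_mult_def by blast
    then have "card (A \<inter> B) = card {(a, b) \<in> A \<times> B. a \<otimes> b = a0 \<otimes> b0}"
      using bij_betw_set_mult_fibre[OF assms(1,2)] by (intro bij_betw_same_card) blast
    moreover have "{x \<in> A \<times> B. ?f x = y} = {(a, b) \<in> A \<times> B. a \<otimes> b = a0 \<otimes> b0}"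
      using ab0(3) by auto
    ultimately show ?thesis by simp
  qed
  then have "card (A \<times> B) = card (A \<inter> B) * card (?f ` (A \<times> B))"
    using assms(3,4) image by (intro card_eq_card_fibre_times_card_image) auto
  then show ?thesis using image by (simp add: card_cartesian_product)
qed

lemma set_mult_subgroup:
  assumes A: "subgroup A G" and B: "subgroup B G" and AB: "conj_invariant G A B"
  shows "subgroup (A <#> B) G"
proof (rule subgroupI)
  have carr: "A \<subseteq> carrier G" "B \<subseteq> carrier G" using A B subgroup.subset by auto
  then show "A <#> B \<subseteq> carrier G" by (rule setmult_subset_G)
  show "A <#> B \<noteq> {}" using A B subgroup.one_closed unfolding set_mult_def by blast
  have conj: "a \<otimes> b \<otimes> inv a \<in> B" if "a \<in> A" "b \<in> B" for a b
    using AB that unfolding conj_invariant_def by blast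
  show "inv x \<in> A <#> B" if x: "x \<in> A <#> B" for x
  proof -
    obtain a b where ab: "a \<in> A" "b \<in> B" "x = a \<otimes> b" using x unfolding set_mult_def by blast
    then have "inv x = inv a \<otimes> (a \<otimes> inv b \<otimes> inv a)"
      using carr by (simp add: inv_mult_group m_assoc subset_iff)
    moreover have "inv a \<in> A" using A ab(1) by (rule subgroup.m_inv_closed)
    moreover have "a \<otimes> inv b \<otimes> inv a \<in> B" using ab(1) subgroup.m_inv_closed[OF B ab(2)] by (rule conj)
    ultimately show ?thesis unfolding set_mult_def by blast
  qed
  show "x \<otimes> y \<in> A <#> B" if xy: "x \<in> A <#> B" "y \<in> A <#> B" for x y
  proof -
    obtain a b a' b' where ab: "a \<in> A" "b \<in> B" "x = a \<otimes> b" "a' \<in> A" "b' \<in> B" "y = a' \<otimes> b'"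
      using xy unfolding set_mult_def by blast
    then have "x \<otimes> y = (a \<otimes> a') \<otimes> ((inv a' \<otimes> b \<otimes> inv (inv a')) \<otimes> b')"
      using carr by (simp add: m_assoc subset_iff)
    moreover have "a \<otimes> a' \<in> A" using A ab(1,4) by (rule subgroup.m_closed)
    moreover have "(inv a' \<otimes> b \<otimes> inv (inv a')) \<otimes> b' \<in> B"
      using B conj[OF subgroup.m_inv_closed[OF A ab(4)] ab(2)] ab(5) by (rule subgroup.m_closed)
    ultimately show ?thesis unfolding set_mult_def by blast
  qed
qed

lemma generate_Un_eq_set_mult:
  assumes A: "subgroup A G" and B: "subgroup B G" and AB: "conj_invariant G A B"
  shows "generate G (A \<union> B) = A <#> B"
proof
  have "A \<union> B \<subseteq> A <#> B"
  proof
    fix x assume "x \<in> A \<union> B"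
    then have "x = x \<otimes> \<one> \<and> x \<in> A \<or> x = \<one> \<otimes> x \<and> x \<in> B"
      using A B subgroup.subset by force
    then show "x \<in> A <#> B"
      using subgroup.one_closed[OF A] subgroup.one_closed[OF B] unfolding set_mult_def by blast
  qed
  then show "generate G (A \<union> B) \<subseteq> A <#> B"
    using set_mult_subgroup[OF assms] by (rule generate_subgroup_incl)
  show "A <#> B \<subseteq> generate G (A \<union> B)"
    unfolding set_mult_def by (auto intro: generate.eng generate.incl)
qed

end

section \<open>\<open>p\<close>-subgroups\<close>

sublocale group_action \<subseteq> group G
  using group_hom group_hom.axioms(1) by blast

lemma (in group_action) orbit_of_moved_point:
  assumes "x \<in> E" "\<exists>g\<in>carrier G. \<phi> g x \<noteq> x" "y \<in> orbit G \<phi> x"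
  shows "\<exists>k\<in>carrier G. \<phi> k y \<noteq> y"
proof (rule ccontr)
  assume fixed: "\<not> (\<exists>k\<in>carrier G. \<phi> k y \<noteq> y)"
  have "y \<in> E" using assms(1,3) element_image unfolding orbit_def by blast
  then obtain h where "h \<in> carrier G" "x = \<phi> h y" using orbit_sym[OF assms(1) _ assms(3)] unfolding orbit_def by blast
  then have "x = y" using fixed by simp
  then show False using assms(2) fixed by simp
qed

lemma (in group_action) prime_dvd_card_moved_points:
  assumes p: "Factorial_Ring.prime p" and order: "order G = p ^ n"
    and A: "A \<subseteq> E" "finite A" "\<And>g x. g \<in> carrier G \<Longrightarrow> x \<in> A \<Longrightarrow> \<phi> g x \<in> A"
  shows "p dvd card {x \<in> A. \<exists>g\<in>carrier G. \<phi> g x \<noteq> x}"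
proof -
  define moved where "moved = {x \<in> A. \<exists>g\<in>carrier G. \<phi> g x \<noteq> x}"
  have orbit_moved: "orbit G \<phi> x \<subseteq> moved" if x: "x \<in> moved" for x
  proof
    fix y assume y: "y \<in> orbit G \<phi> x"
    then have "y \<in> A" using A(3) x unfolding moved_def orbit_def by blast
    then show "y \<in> moved" using orbit_of_moved_point[OF _ _ y] x A(1) unfolding moved_def by blast
  qed
  have orbit_dvd: "p dvd card (orbit G \<phi> x)" if x: "x \<in> moved" for x
  proof -
    have "x \<in> E" using x A(1) unfolding moved_def by blast
    then have "card (orbit G \<phi> x) dvd p ^ n"
      using orbit_stabilizer_theorem order by (metis dvd_triv_left)
    then obtain i where i: "card (orbit G \<phi> x) = p ^ i" using p divides_primepow_nat by blast
    have "orbit G \<phi> x \<noteq> {x}"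
      using x unfolding moved_def orbit_def by blast
    moreover have "x \<in> orbit G \<phi> x" using \<open>x \<in> E\<close> by (rule orbit_refl)
    ultimately have "i \<noteq> 0" using i by (auto simp: card_1_singleton_iff)
    then show ?thesis using i by simp
  qed
  have disjoint: "c1 \<inter> c2 = {}" if "c1 \<in> orbit G \<phi> ` moved" "c2 \<in> orbit G \<phi> ` moved" "c1 \<noteq> c2"
    for c1 c2
  proof -
    have "orbit G \<phi> ` moved \<subseteq> orbits G E \<phi>"
      using A(1) unfolding orbits_def moved_def by blast
    then show ?thesis using disjoint_union that by blast
  qed
  have "moved = \<Union> (orbit G \<phi> ` moved)"
    using orbit_moved orbit_refl A(1) unfolding moved_def by blast
  moreover have "finite moved" using A(2) unfolding moved_def by simp
  ultimately have "p dvd card moved"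
    using orbit_dvd disjoint dvd_partition[of "orbit G \<phi> ` moved" p] by auto
  then show ?thesis unfolding moved_def .
qed

context group
begin

context
  fixes p :: nat assumes prime_p: "Factorial_Ring.prime p"
begin

lemma p_subgroup_subset:
  assumes "p_subgroup G p Q" "subgroup J G" "J \<subseteq> Q"
  shows "p_subgroup G p J"
proof -
  obtain k where "card Q = p ^ k" "subgroup Q G" "finite Q" using assms(1) unfolding p_subgroup_def by blast
  then have "card J dvd p ^ k" using subgroup_card_dvd assms(2,3) by metis
  then show ?thesis
    using assms(2,3) \<open>finite Q\<close> prime_p divides_primepow_nat finite_subset
    unfolding p_subgroup_def by metis
qed

lemma p_subgroup_generate_subset:
  assumes "p_subgroup G p Q" "S \<subseteq> Q"
  shows "p_subgroup G p (generate G S)"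
proof -
  have "subgroup Q G" using assms(1) unfolding p_subgroup_def by blast
  then have "S \<subseteq> carrier G" "generate G S \<subseteq> Q"
    using assms(2) subgroup.subset generate_subgroup_incl by blast+
  then show ?thesis using assms(1) generate_is_subgroup p_subgroup_subset by blast
qed

lemma p_subgroup_generate_Un:
  assumes A: "p_subgroup G p A" and B: "p_subgroup G p B" and AB: "conj_invariant G A B"
  shows "p_subgroup G p (generate G (A \<union> B))"
proof -
  obtain i j where ij: "card A = p ^ i" "card B = p ^ j" "subgroup A G" "subgroup B G"
    "finite A" "finite B"
    using A B unfolding p_subgroup_def by blast
  have "card (A <#> B) * card (A \<inter> B) = p ^ (i + j)"
    using card_set_mult[OF ij(3-6)] ij(1,2) by (simp add: power_add)
  then obtain k where "card (A <#> B) = p ^ k"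
    using prime_p divides_primepow_nat by (metis dvd_triv_left)
  moreover have "finite (A <#> B)" using ij(5,6) unfolding set_mult_def by blast
  ultimately show ?thesis
    using generate_Un_eq_set_mult[OF ij(3,4) AB] set_mult_subgroup[OF ij(3,4) AB]
    unfolding p_subgroup_def by auto
qed

lemma p_subgroup_generate_singleton:
  assumes "c \<in> carrier G" "c [^] (p ^ m) = \<one>"
  shows "p_subgroup G p (generate G {c})"
proof -
  have "ord c dvd p ^ m" using pow_eq_id assms by blast
  then obtain j where "ord c = p ^ j" using divides_primepow_nat[OF prime_p] by blast
  then have card: "card (generate G {c}) = p ^ j" using generate_pow_card[OF assms(1)] by simp
  moreover have "p ^ j \<noteq> 0" using prime_gt_0_nat[OF prime_p] by simp
  ultimately have "finite (generate G {c})" by (metis card.infinite)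
  moreover have "subgroup (generate G {c}) G" using assms(1) by (intro generate_is_subgroup) blast
  ultimately show ?thesis unfolding p_subgroup_def using card by blast
qed

lemma prime_dvd_card_r_cosets:
  assumes P: "p_subgroup G p P" and M: "subgroup M G" "M \<subseteq> P" "M \<noteq> P"
  shows "p dvd card ((\<lambda>g. M #> g) ` P)"
proof -
  obtain k j where kj: "card P = p ^ k" "card M = p ^ j" "subgroup P G" "finite P"
    using P p_subgroup_subset[OF P M(1,2)] unfolding p_subgroup_def by metis
  interpret P: group "G\<lparr>carrier := P\<rparr>" using kj(3) by (rule subgroup_imp_group)
  have "subgroup M (G\<lparr>carrier := P\<rparr>)" using M(1) kj(3) M(2) by (rule subgroup_incl)
  then have "card (rcosets\<^bsub>G\<lparr>carrier := P\<rparr>\<^esub> M) * card M = order (G\<lparr>carrier := P\<rparr>)"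
    by (rule P.lagrange)
  moreover have "rcosets\<^bsub>G\<lparr>carrier := P\<rparr>\<^esub> M = (\<lambda>g. M #> g) ` P"
    unfolding RCOSETS_def r_coset_def by auto
  ultimately have card: "card ((\<lambda>g. M #> g) ` P) * p ^ j = p ^ k"
    using kj by (simp add: order_def)
  have "card M < card P" using M kj(4) by (simp add: psubset_card_mono)
  then have "j < k" using kj prime_gt_1_nat[OF prime_p] by (simp add: power_strict_increasing_iff)
  then have "p ^ k = p ^ (k - j) * p ^ j" by (simp add: power_add[symmetric])
  then have "card ((\<lambda>g. M #> g) ` P) = p ^ (k - j)"
    using card prime_gt_0_nat[OF prime_p] by simp
  then show ?thesis using \<open>j < k\<close> by simp
qed

lemma prime_dvd_card_fixed_r_cosets:
  assumes P: "p_subgroup G p P" and M: "subgroup M G" "M \<subseteq> P" "M \<noteq> P"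
  shows "p dvd card {C \<in> (\<lambda>g. M #> g) ` P. \<forall>h\<in>M. h <# C #> inv h = C}"
proof -
  define \<phi> where "\<phi> = (\<lambda>g. \<lambda>S \<in> {S. S \<subseteq> carrier G}. g <# S #> inv g)"
  define cosets where "cosets = (\<lambda>g. M #> g) ` P"
  interpret conj: group_action "G\<lparr>carrier := M\<rparr>" "{S. S \<subseteq> carrier G}" \<phi>
    unfolding \<phi>_def by (rule group_action.induced_action[OF action_by_conjugation_on_power_set M(1)])
  have P_sub: "subgroup P G" "finite P" "P \<subseteq> carrier G"
    using P subgroup.subset unfolding p_subgroup_def by auto
  have M_carr: "M \<subseteq> carrier G" using M subgroup.subset by blast
  have cosets_sub: "cosets \<subseteq> {S. S \<subseteq> carrier G}" "finite cosets"
    using r_coset_subset_G[OF M_carr] P_sub unfolding cosets_def by blast+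
  then have \<phi>_cosets: "\<phi> h C = h <# C #> inv h" if "C \<in> cosets" for h C
    using that unfolding \<phi>_def by auto
  have cosets_closed: "\<phi> h C \<in> cosets" if h: "h \<in> M" and C: "C \<in> cosets" for h C
  proof -
    obtain g where g: "g \<in> P" "C = M #> g" using C unfolding cosets_def by blast
    have "h \<in> P" using h M(2) by blast
    then have "g \<otimes> inv h \<in> P"
      using P_sub(1) g(1) by (simp add: subgroup.m_closed subgroup.m_inv_closed)
    moreover have "\<phi> h C = M #> (g \<otimes> inv h)"
      using \<phi>_cosets[OF C] conj_r_coset[OF M(1) h] g P_sub(3) by auto
    ultimately show ?thesis unfolding cosets_def by blast
  qed
  obtain j where j: "order (G\<lparr>carrier := M\<rparr>) = p ^ j"
    using p_subgroup_subset[OF P M(1,2)] unfolding p_subgroup_def order_def by auto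
  let ?moved = "{C \<in> cosets. \<exists>h\<in>M. \<phi> h C \<noteq> C}"
  have "p dvd card {C \<in> cosets. \<exists>h\<in>carrier (G\<lparr>carrier := M\<rparr>). \<phi> h C \<noteq> C}"
    by (rule conj.prime_dvd_card_moved_points[OF prime_p j cosets_sub]) (use cosets_closed in simp)
  then have "p dvd card ?moved" by simp
  moreover have "p dvd card cosets" unfolding cosets_def by (rule prime_dvd_card_r_cosets[OF P M])
  moreover have "card (cosets - ?moved) = card cosets - card ?moved"
    using cosets_sub(2) by (intro card_Diff_subset) auto
  moreover have "cosets - ?moved = {C \<in> cosets. \<forall>h\<in>M. h <# C #> inv h = C}"
    using \<phi>_cosets by auto
  ultimately show ?thesis unfolding cosets_def by (simp add: dvd_diff_nat)
qed

lemma p_subgroup_normalizer_condition: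
  assumes P: "p_subgroup G p P" and M: "subgroup M G" "M \<subseteq> P" "M \<noteq> P"
  shows "\<exists>g\<in>P - M. conj_invariant G {g} M"
proof -
  let ?fixed = "{C \<in> (\<lambda>g. M #> g) ` P. \<forall>h\<in>M. h <# C #> inv h = C}"
  have P_sub: "subgroup P G" "P \<subseteq> carrier G" using P subgroup.subset unfolding p_subgroup_def by auto
  have M_carr: "M \<subseteq> carrier G" using M subgroup.subset by blast
  have "h <# M #> inv h = M" if "h \<in> M" for h
    using that M_carr M(1) by (simp add: coset_join3 coset_join2 subgroup.m_inv_closed subset_iff)
  moreover have "M = M #> \<one>" "\<one> \<in> P" using M_carr P_sub(1) subgroup.one_closed by auto
  ultimately have "M \<in> ?fixed" by auto
  moreover have "\<not> p dvd 1" using prime_gt_1_nat[OF prime_p] by simp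
  then have "?fixed \<noteq> {M}" using prime_dvd_card_fixed_r_cosets[OF P M] by auto
  ultimately obtain g where g: "g \<in> P" "M #> g \<noteq> M" "\<forall>h\<in>M. h <# (M #> g) #> inv h = M #> g"
    by blast
  then have "g \<notin> M" using coset_join2 M(1) P_sub(2) by blast
  moreover have "conj_invariant G {g} M"
    using g conj_r_coset[OF M(1)] P_sub(2) by (intro fixed_r_coset_imp_conj_invariant[OF M(1)]) auto
  ultimately show ?thesis using g(1) by blast
qed

lemma p_subgroup_proper_normal_extension:
  assumes P: "p_subgroup G p P" and I: "subgroup I G" "I \<subseteq> P" "I \<noteq> P"
  obtains M where "subgroup M G" "I \<subseteq> M" "M \<subseteq> P" "M \<noteq> P" "conj_invariant G P M"
proof -
  define S where "S = {M. subgroup M G \<and> I \<subseteq> M \<and> M \<subseteq> P \<and> M \<noteq> P}"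
  have P_sub: "subgroup P G" "finite P" using P unfolding p_subgroup_def by auto
  have "finite S" using P_sub(2) unfolding S_def by (rule rev_finite_subset[OF finite_Pow_iff[THEN iffD2]]) blast
  moreover have "I \<in> S" using I unfolding S_def by blast
  ultimately obtain M where M: "M \<in> S" "I \<subseteq> M" and maximal: "\<And>M'. M' \<in> S \<Longrightarrow> M \<subseteq> M' \<Longrightarrow> M = M'"
    using finite_has_maximal2 by metis
  have M_sub: "subgroup M G" "M \<subseteq> P" "M \<noteq> P" "finite M"
    using M(1) P_sub(2) finite_subset unfolding S_def by auto
  define N where "N = {g \<in> P. conj_invariant G {g} M}"
  have N: "subgroup N G" "N \<subseteq> P" unfolding N_def
    using subgroup_normalizing_elements[OF P_sub(1) M_sub(1,4)] by auto
  have "M \<subseteq> N"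
    using M_sub(1,2) subgroup_conj_invariant_self[OF M_sub(1)] conj_invariant_subset
    unfolding N_def by blast
  moreover obtain g where "g \<in> P - M" "conj_invariant G {g} M"
    using p_subgroup_normalizer_condition[OF P M_sub(1-3)] by blast
  ultimately have "M \<noteq> N" "I \<subseteq> N" using M(2) unfolding N_def by auto
  then have "N = P" using maximal N \<open>M \<subseteq> N\<close> unfolding S_def by blast
  then have "conj_invariant G P M" unfolding N_def conj_invariant_def by blast
  then show ?thesis using that M_sub M(2) by blast
qed

lemma generator_normalizing_subgroup:
  assumes "p_subgroup G p P" "K \<subseteq> P" "conj_invariant G P K"
    and "Y \<subseteq> P" "conj_invariant G P Y" "P = generate G (Y \<union> K)"
    and "subgroup I G" "K \<subseteq> I" "I \<subseteq> P" "I \<noteq> P" "I = generate G ((Y \<inter> I) \<union> K)"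
  shows "\<exists>x\<in>Y - I. conj_invariant G {x} I"
  using assms
proof (induction "card P" arbitrary: P Y rule: less_induct)
  case less
  note P = less.prems(1) and K = less.prems(2,3) and Y = less.prems(4-6) and I = less.prems(7-11)
  have P_sub: "subgroup P G" "finite P" "P \<subseteq> carrier G"
    using P subgroup.subset unfolding p_subgroup_def by auto
  have carr: "Y \<subseteq> carrier G" "K \<subseteq> carrier G" using Y(1) K(1) P_sub(3) by auto
  obtain M where M: "subgroup M G" "I \<subseteq> M" "M \<subseteq> P" "M \<noteq> P" "conj_invariant G P M"
    using p_subgroup_proper_normal_extension[OF P I(1,3,4)] by blast
  define M' where "M' = generate G ((Y \<inter> M) \<union> K)"
  have M'_eq: "M' = generate G ((Y \<inter> M') \<union> K)"
    unfolding M'_def using carr by (intro generate_eq_generate_Int_Un) auto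
  have "I \<subseteq> M'"
    unfolding M'_def using I(2,5) M(2) carr by (metis Int_mono Un_mono mono_generate order_refl)
  have "(Y \<inter> M) \<union> K \<subseteq> M" using M(2) I(2) by blast
  then have "M' \<subseteq> M" unfolding M'_def using M(1) by (rule generate_subgroup_incl)
  show ?case
  proof (cases "M' = I")
    case True
    have "conj_invariant G P ((Y \<inter> M) \<union> K)"
      using Y(2) M(5) K(2) by (intro conj_invariant_Un conj_invariant_Int)
    moreover have "(Y \<inter> M) \<union> K \<subseteq> carrier G" using carr by blast
    ultimately have "conj_invariant G P M'"
      unfolding M'_def using P_sub(3) by (intro conj_invariant_generate) auto
    then show ?thesis using True Y(1,3) I(1-4) by (intro generator_outside_normal_subgroup) auto
  next
    case False
    have M'_P: "M' \<subseteq> P" using \<open>M' \<subseteq> M\<close> M(3) by blast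
    have M'_p: "p_subgroup G p M'"
      unfolding M'_def using P Y(1) K(1) by (intro p_subgroup_generate_subset) auto
    then have "subgroup M' G" unfolding p_subgroup_def by blast
    have "card M' < card P" using M'_P M(4) \<open>M' \<subseteq> M\<close> M(3) P_sub(2) by (metis psubset_card_mono psubsetI subset_antisym)
    moreover have "K \<subseteq> M'" unfolding M'_def using subset_generate[of "(Y \<inter> M) \<union> K"] by blast
    moreover have "conj_invariant G M' K" using K(2) M'_P by (rule conj_invariant_subset)
    moreover have "conj_invariant G M' (Y \<inter> M')"
      using conj_invariant_subset[OF Y(2) M'_P] subgroup_conj_invariant_self[OF \<open>subgroup M' G\<close>]
      by (rule conj_invariant_Int)
    moreover have "(Y \<inter> M') \<inter> I = Y \<inter> I" using \<open>I \<subseteq> M'\<close> by blast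
    then have "I = generate G (((Y \<inter> M') \<inter> I) \<union> K)" using I(5) by simp
    ultimately obtain x where "x \<in> (Y \<inter> M') - I" "conj_invariant G {x} I"
      using less.hyps[OF _ M'_p _ _ _ _ M'_eq I(1,2) \<open>I \<subseteq> M'\<close>] False by blast
    then show ?thesis by blast
  qed
qed

end

end

section \<open>The Baer--Suzuki theorem\<close>

locale baer_suzuki_data = group G for G (structure) +
  fixes p :: nat and H K D :: "'a set"
  assumes prime_p: "Factorial_Ring.prime p"
    and H: "subgroup H G" "finite H"
    and K: "p_subgroup G p K" "K \<subseteq> H" "conj_invariant G H K"
    and D: "D \<subseteq> H" "conj_invariant G H D"
    and pairs: "\<And>a b. a \<in> D \<Longrightarrow> b \<in> D \<Longrightarrow> p_subgroup G p (generate G ({a, b} \<union> K))"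
begin

lemma carrier_subsets: "H \<subseteq> carrier G" "K \<subseteq> carrier G" "D \<subseteq> carrier G"
proof -
  show "H \<subseteq> carrier G" using H(1) by (rule subgroup.subset)
  then show "K \<subseteq> carrier G" "D \<subseteq> carrier G" using K(2) D(1) by auto
qed

definition D_p_subgroups :: "'a set set" where
  "D_p_subgroups = {generate G (E \<union> K) | E. E \<subseteq> D \<and> p_subgroup G p (generate G (E \<union> K))}"

definition maximal_D_p_subgroup :: "'a set \<Rightarrow> bool" where
  "maximal_D_p_subgroup Q \<longleftrightarrow> Q \<in> D_p_subgroups \<and> (\<forall>Q'\<in>D_p_subgroups. Q \<subseteq> Q' \<longrightarrow> Q' = Q)"

lemma D_p_subgroupsI:
  "E \<subseteq> D \<Longrightarrow> p_subgroup G p (generate G (E \<union> K)) \<Longrightarrow> generate G (E \<union> K) \<in> D_p_subgroups"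
  unfolding D_p_subgroups_def by blast

lemma D_p_subgroupsD:
  assumes "Q \<in> D_p_subgroups"
  shows "p_subgroup G p Q" "K \<subseteq> Q" "Q \<subseteq> H" "Q = generate G ((D \<inter> Q) \<union> K)"
proof -
  obtain E where E: "E \<subseteq> D" "Q = generate G (E \<union> K)" "p_subgroup G p Q"
    using assms unfolding D_p_subgroups_def by blast
  show "p_subgroup G p Q" by (rule E(3))
  show "K \<subseteq> Q" unfolding E(2) using subset_generate[of "E \<union> K"] by blast
  show "Q \<subseteq> H" unfolding E(2) using E(1) D(1) K(2) H(1) by (intro generate_subgroup_incl) auto
  show "Q = generate G ((D \<inter> Q) \<union> K)"
    unfolding E(2) using E(1) carrier_subsets by (intro generate_eq_generate_Int_Un)
qed

lemma exists_maximal_D_p_subgroup: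
  assumes "Q \<in> D_p_subgroups"
  obtains Q' where "maximal_D_p_subgroup Q'" "Q \<subseteq> Q'"
proof -
  have "D_p_subgroups \<subseteq> Pow H" using D_p_subgroupsD(3) by blast
  then have "finite D_p_subgroups" using H(2) by (meson finite_Pow_iff finite_subset)
  then show ?thesis
    using finite_has_maximal2[OF _ assms] that unfolding maximal_D_p_subgroup_def by metis
qed

lemma pair_in_D_p_subgroups: "a \<in> D \<Longrightarrow> b \<in> D \<Longrightarrow> generate G ({a, b} \<union> K) \<in> D_p_subgroups"
  using pairs by (intro D_p_subgroupsI) auto

definition overlapping_pair :: "'a set \<Rightarrow> 'a set \<Rightarrow> bool" where
  "overlapping_pair P P' \<longleftrightarrow> maximal_D_p_subgroup P \<and> maximal_D_p_subgroup P' \<and> P \<noteq> P' \<and>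
     (D - K) \<inter> P \<inter> P' \<noteq> {}"

lemma exists_overlapping_pair:
  assumes "\<And>Q. maximal_D_p_subgroup Q \<Longrightarrow> \<not> D \<subseteq> Q"
  obtains P P' where "overlapping_pair P P'"
proof -
  have "subgroup K G" using K(1) unfolding p_subgroup_def by blast
  then have "generate G ({} \<union> K) = K" using generateI[of K K] by (simp add: generate_subgroup_incl)
  then have "K \<in> D_p_subgroups" using D_p_subgroupsI[of "{}"] K(1) by simp
  then obtain Q where "maximal_D_p_subgroup Q" "K \<subseteq> Q" by (rule exists_maximal_D_p_subgroup)
  then obtain a where a: "a \<in> D" "a \<notin> K" using assms by blast
  obtain P where P: "maximal_D_p_subgroup P" "generate G ({a, a} \<union> K) \<subseteq> P"
    using exists_maximal_D_p_subgroup[OF pair_in_D_p_subgroups[OF a(1) a(1)]] by blast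
  then obtain d where d: "d \<in> D" "d \<notin> P" using assms by blast
  obtain P' where P': "maximal_D_p_subgroup P'" "generate G ({a, d} \<union> K) \<subseteq> P'"
    using exists_maximal_D_p_subgroup[OF pair_in_D_p_subgroups[OF a(1) d(1)]] by blast
  have "a \<in> P" "a \<in> P'" "d \<in> P'"
    using P(2) P'(2) subset_generate[of "{a, a} \<union> K"] subset_generate[of "{a, d} \<union> K"] by blast+
  then show ?thesis using that P(1) P'(1) a d unfolding overlapping_pair_def by blast
qed

lemma exists_greatest_overlapping_pair:
  assumes "overlapping_pair P0 P0'"
  obtains P P' where "overlapping_pair P P'"
    "\<And>Q Q'. overlapping_pair Q Q' \<Longrightarrow> card (D \<inter> Q \<inter> Q') \<le> card (D \<inter> P \<inter> P')"
proof -
  have "card (D \<inter> Q \<inter> Q') < Suc (card D)" for Q Q'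
    using finite_subset[OF D(1) H(2)] by (intro le_imp_less_Suc card_mono) auto
  then have "\<exists>PP. case_prod overlapping_pair PP \<and> (\<forall>QQ. case_prod overlapping_pair QQ \<longrightarrow>
      (\<lambda>(Q, Q'). card (D \<inter> Q \<inter> Q')) QQ \<le> (\<lambda>(Q, Q'). card (D \<inter> Q \<inter> Q')) PP)"
    using assms by (intro ex_has_greatest_nat[where k = "(P0, P0')" and b = "Suc (card D)"]) auto
  then show ?thesis using that by force
qed

lemma generate_Un_K_below:
  assumes "Q \<in> D_p_subgroups" "E \<subseteq> D \<inter> Q"
  shows "subgroup (generate G (E \<union> K)) G" "E \<union> K \<subseteq> generate G (E \<union> K)"
    "generate G (E \<union> K) \<subseteq> Q"
proof -
  show "subgroup (generate G (E \<union> K)) G" using assms(2) carrier_subsets by (intro generate_is_subgroup) auto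
  show "E \<union> K \<subseteq> generate G (E \<union> K)" by (rule subset_generate)
  have "subgroup Q G" using D_p_subgroupsD(1)[OF assms(1)] unfolding p_subgroup_def by blast
  then show "generate G (E \<union> K) \<subseteq> Q"
    using assms(2) D_p_subgroupsD(2)[OF assms(1)] by (intro generate_subgroup_incl) auto
qed

lemma maximal_pair_normalizing_element:
  assumes P: "maximal_D_p_subgroup P" and P': "maximal_D_p_subgroup P'" and "P \<noteq> P'"
  defines "I \<equiv> generate G ((D \<inter> P \<inter> P') \<union> K)"
  shows "\<exists>x \<in> (D \<inter> P) - I. conj_invariant G {x} I"
proof -
  have P_in: "P \<in> D_p_subgroups" and P'_in: "P' \<in> D_p_subgroups"
    using P P' unfolding maximal_D_p_subgroup_def by blast+
  note P_facts = D_p_subgroupsD[OF P_in]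
  have "D \<inter> P \<inter> P' \<subseteq> D \<inter> P" "D \<inter> P \<inter> P' \<subseteq> D \<inter> P'" by auto
  then have I: "subgroup I G" "K \<subseteq> I" and "I \<subseteq> P" "I \<subseteq> P'"
    unfolding I_def using generate_Un_K_below[OF P_in] generate_Un_K_below[OF P'_in] by auto
  moreover have "I \<noteq> P"
  proof
    assume "I = P"
    then have "P \<subseteq> P'" using \<open>I \<subseteq> P'\<close> by simp
    then show False using P P'_in \<open>P \<noteq> P'\<close> unfolding maximal_D_p_subgroup_def by blast
  qed
  moreover have "I = generate G (((D \<inter> P) \<inter> I) \<union> K)"
    unfolding I_def using carrier_subsets by (intro generate_eq_generate_Int_Un) auto
  moreover have "conj_invariant G P (D \<inter> P)"
    using D(2) _ P_facts(3) by (rule conj_invariant_Int_subgroup) (use P_facts(1) in \<open>simp add: p_subgroup_def\<close>)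
  moreover have "conj_invariant G P K" using K(3) P_facts(3) by (rule conj_invariant_subset)
  ultimately show ?thesis
    using generator_normalizing_subgroup[OF prime_p P_facts(1) P_facts(2) _ _ _ P_facts(4) I]
    by blast
qed

end

(* The induction hypothesis of the proof of baer_suzuki below. *)
locale baer_suzuki_step = baer_suzuki_data +
  assumes smaller_instances: "\<And>H' K' D'. baer_suzuki_data G p H' K' D' \<Longrightarrow>
    card H' - card K' < card H - card K \<Longrightarrow> p_subgroup G p (generate G (D' \<union> K'))"
begin

lemma p_subgroup_if_normal_extension:
  assumes I: "p_subgroup G p I" "K \<subseteq> I" "K \<noteq> I" "I \<subseteq> H" "conj_invariant G H I"
  shows "p_subgroup G p (generate G (D \<union> K))"
proof -
  have pairs_I: "p_subgroup G p (generate G ({a, b} \<union> I))" if ab: "a \<in> D" "b \<in> D" for a b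
  proof -
    let ?A = "generate G ({a, b} \<union> K)"
    have "?A \<subseteq> H" using ab D(1) K(2) H(1) by (intro generate_subgroup_incl) auto
    then have "p_subgroup G p (generate G (?A \<union> I))"
      using p_subgroup_generate_Un[OF prime_p pairs[OF ab] I(1)] conj_invariant_subset[OF I(5)] by blast
    moreover have "{a, b} \<union> I \<subseteq> generate G (?A \<union> I)"
      using subset_generate[of "{a, b} \<union> K"] subset_generate[of "?A \<union> I"] by blast
    ultimately show ?thesis by (rule p_subgroup_generate_subset[OF prime_p])
  qed
  have "baer_suzuki_data G p H I D"
    using is_group prime_p H I(1,4,5) D pairs_I
    unfolding baer_suzuki_data_def baer_suzuki_data_axioms_def by blast
  moreover have "card K < card I"
    using I(2,3) finite_subset[OF I(4) H(2)] by (simp add: psubset_card_mono)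
  moreover have "card I \<le> card H" using I(4) H(2) by (rule card_mono[rotated])
  ultimately have "p_subgroup G p (generate G (D \<union> I))"
    by (intro smaller_instances) auto
  moreover have "D \<union> K \<subseteq> generate G (D \<union> I)"
    using I(2) subset_generate[of "D \<union> I"] by blast
  ultimately show ?thesis by (rule p_subgroup_generate_subset[OF prime_p])
qed

lemma normalizer_in_maximal_D_p_subgroup:
  assumes I: "subgroup I G" "K \<subseteq> I" "I \<subseteq> H" and not_normal: "\<not> conj_invariant G H I"
  obtains Q where "maximal_D_p_subgroup Q" "D \<inter> {h \<in> H. conj_invariant G {h} I} \<subseteq> Q"
proof -
  define N where "N = {h \<in> H. conj_invariant G {h} I}"
  have N: "subgroup N G" "N \<subseteq> H" "finite N"
    unfolding N_def using subgroup_normalizing_elements[OF H(1) I(1) finite_subset[OF I(3) H(2)]] H(2)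
    by auto
  have "K \<subseteq> N"
    using I subgroup_conj_invariant_self[OF I(1)] conj_invariant_subset K(2) unfolding N_def by blast
  have "baer_suzuki_data G p N K (D \<inter> N)"
    using is_group prime_p N K(1) \<open>K \<subseteq> N\<close> conj_invariant_subset[OF K(3) N(2)]
      conj_invariant_Int_subgroup[OF D(2) N(1,2)] pairs
    unfolding baer_suzuki_data_def baer_suzuki_data_axioms_def by blast
  moreover have "N \<noteq> H" using not_normal unfolding N_def conj_invariant_def by blast
  then have "card N < card H" using N(2) H(2) by (simp add: psubset_card_mono)
  moreover have "card K \<le> card N" using \<open>K \<subseteq> N\<close> N(3) by (rule card_mono[rotated])
  ultimately have "p_subgroup G p (generate G ((D \<inter> N) \<union> K))" by (intro smaller_instances) auto
  then have "generate G ((D \<inter> N) \<union> K) \<in> D_p_subgroups" by (intro D_p_subgroupsI) auto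
  then obtain Q where "maximal_D_p_subgroup Q" "generate G ((D \<inter> N) \<union> K) \<subseteq> Q"
    by (rule exists_maximal_D_p_subgroup)
  then show ?thesis using that subset_generate[of "(D \<inter> N) \<union> K"] unfolding N_def by blast
qed

lemma greatest_overlap_generates_normal:
  assumes PP': "overlapping_pair P P'"
    and greatest: "\<And>Q Q'. overlapping_pair Q Q' \<Longrightarrow> card (D \<inter> Q \<inter> Q') \<le> card (D \<inter> P \<inter> P')"
  shows "conj_invariant G H (generate G ((D \<inter> P \<inter> P') \<union> K))"
proof (rule ccontr)
  define E where "E = D \<inter> P \<inter> P'"
  define I where "I = generate G (E \<union> K)"
  assume "\<not> conj_invariant G H (generate G ((D \<inter> P \<inter> P') \<union> K))"
  then have not_normal: "\<not> conj_invariant G H I" unfolding I_def E_def .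
  have P: "maximal_D_p_subgroup P" "maximal_D_p_subgroup P'" "P \<noteq> P'"
    and "(D - K) \<inter> E \<noteq> {}" using PP' unfolding overlapping_pair_def E_def by auto
  then have P_in: "P \<in> D_p_subgroups" unfolding maximal_D_p_subgroup_def by blast
  have "E \<subseteq> D \<inter> P" unfolding E_def by blast
  then have I: "subgroup I G" "K \<subseteq> I" "E \<subseteq> I" "I \<subseteq> P"
    unfolding I_def using generate_Un_K_below[OF P_in] by auto
  then have "I \<subseteq> H" using D_p_subgroupsD(3)[OF P_in] by blast
  obtain x where x: "x \<in> (D \<inter> P) - I" "conj_invariant G {x} I"
    using maximal_pair_normalizing_element[OF P] unfolding I_def E_def by blast
  have "D \<inter> P' \<inter> P = E" unfolding E_def by blast
  then have "generate G ((D \<inter> P' \<inter> P) \<union> K) = I" unfolding I_def by simp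
  then obtain y where y: "y \<in> (D \<inter> P') - I" "conj_invariant G {y} I"
    using maximal_pair_normalizing_element[OF P(2,1) P(3)[symmetric]] by metis
  obtain P'' where P'': "maximal_D_p_subgroup P''" "D \<inter> {h \<in> H. conj_invariant G {h} I} \<subseteq> P''"
    using normalizer_in_maximal_D_p_subgroup[OF I(1,2) \<open>I \<subseteq> H\<close> not_normal] by blast
  have "E \<subseteq> {h \<in> H. conj_invariant G {h} I}"
    using I(3) \<open>I \<subseteq> H\<close> conj_invariant_subset[OF subgroup_conj_invariant_self[OF I(1)]] by blast
  then have "x \<in> P''" "y \<in> P''" "E \<subseteq> P''" using x y D(1) P''(2) unfolding E_def by auto
  show False
  proof (cases "P'' = P")
    case True
    then show False using y \<open>y \<in> P''\<close> I(3) unfolding E_def by blast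
  next
    case False
    then have "overlapping_pair P P''"
      using P(1) P''(1) \<open>(D - K) \<inter> E \<noteq> {}\<close> \<open>E \<subseteq> P''\<close> unfolding overlapping_pair_def E_def by blast
    then have "card (D \<inter> P \<inter> P'') \<le> card E" unfolding E_def by (rule greatest)
    moreover have "insert x E \<subseteq> D \<inter> P \<inter> P''" using x \<open>x \<in> P''\<close> \<open>E \<subseteq> P''\<close> unfolding E_def by blast
    then have "card (insert x E) \<le> card (D \<inter> P \<inter> P'')"
      using finite_subset[OF D(1) H(2)] by (intro card_mono) auto
    moreover have "x \<notin> E" using x I(3) by blast
    then have "card (insert x E) = Suc (card E)"
      using finite_subset[OF D(1) H(2)] unfolding E_def by simp
    ultimately show False by simp
  qed
qed

lemma p_subgroup_generate_D_K: "p_subgroup G p (generate G (D \<union> K))"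
proof (cases "\<exists>Q. maximal_D_p_subgroup Q \<and> D \<subseteq> Q")
  case True
  then obtain Q where Q: "Q \<in> D_p_subgroups" "D \<subseteq> Q" unfolding maximal_D_p_subgroup_def by blast
  then have "D \<union> K \<subseteq> Q" using D_p_subgroupsD(2) by blast
  then show ?thesis using D_p_subgroupsD(1)[OF Q(1)] p_subgroup_generate_subset[OF prime_p] by blast
next
  case False
  then obtain P0 P0' where "overlapping_pair P0 P0'" using exists_overlapping_pair by blast
  then obtain P P' where PP: "overlapping_pair P P'"
    and greatest: "\<And>Q Q'. overlapping_pair Q Q' \<Longrightarrow> card (D \<inter> Q \<inter> Q') \<le> card (D \<inter> P \<inter> P')"
    using exists_greatest_overlapping_pair by blast
  define I where "I = generate G ((D \<inter> P \<inter> P') \<union> K)"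
  have "conj_invariant G H I" unfolding I_def using PP greatest by (rule greatest_overlap_generates_normal)
  have P: "P \<in> D_p_subgroups" "(D - K) \<inter> P \<inter> P' \<noteq> {}"
    using PP unfolding overlapping_pair_def maximal_D_p_subgroup_def by auto
  have "(D \<inter> P \<inter> P') \<union> K \<subseteq> P" using D_p_subgroupsD(2)[OF P(1)] by blast
  then have "p_subgroup G p I" "I \<subseteq> P" unfolding I_def
    using p_subgroup_generate_subset[OF prime_p D_p_subgroupsD(1)[OF P(1)]] generate_subgroup_incl
      D_p_subgroupsD(1)[OF P(1)] unfolding p_subgroup_def by auto
  then have "I \<subseteq> H" using D_p_subgroupsD(3)[OF P(1)] by blast
  moreover have "K \<subseteq> I" "K \<noteq> I"
    using subset_generate[of "(D \<inter> P \<inter> P') \<union> K"] P(2) unfolding I_def by blast+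
  ultimately show ?thesis
    using \<open>p_subgroup G p I\<close> \<open>conj_invariant G H I\<close> by (intro p_subgroup_if_normal_extension)
qed

end

theorem (in group) baer_suzuki:
  assumes "baer_suzuki_data G p H K D"
  shows "p_subgroup G p (generate G (D \<union> K))"
  using assms
proof (induction "card H - card K" arbitrary: H K D rule: less_induct)
  case less
  then interpret baer_suzuki_step G p H K D
    by (intro baer_suzuki_step.intro baer_suzuki_step_axioms.intro) auto
  show ?case by (rule p_subgroup_generate_D_K)
qed

lemma (in group) baer_suzuki_conjugacy_class:
  assumes p: "Factorial_Ring.prime p" and fin: "finite (carrier G)" and t: "t \<in> carrier G"
    and pairs: "\<And>a b. a \<in> (\<lambda>g. g \<otimes> t \<otimes> inv g) ` carrier G \<Longrightarrow> b \<in> (\<lambda>g. g \<otimes> t \<otimes> inv g) ` carrier G \<Longrightarrow>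
      p_subgroup G p (generate G {a, b})"
  shows "generate G ((\<lambda>g. g \<otimes> t \<otimes> inv g) ` carrier G) \<lhd> G"
    and "p_subgroup G p (generate G ((\<lambda>g. g \<otimes> t \<otimes> inv g) ` carrier G))"
proof -
  let ?D = "(\<lambda>g. g \<otimes> t \<otimes> inv g) ` carrier G"
  have D: "?D \<subseteq> carrier G" using t by auto
  have conj_D: "conj_invariant G (carrier G) ?D"
    unfolding conj_invariant_def
  proof (intro ballI)
    fix h d assume h: "h \<in> carrier G" and "d \<in> ?D"
    then obtain g where g: "g \<in> carrier G" "d = g \<otimes> t \<otimes> inv g" by blast
    then have "h \<otimes> d \<otimes> inv h = (h \<otimes> g) \<otimes> t \<otimes> inv (h \<otimes> g)"
      using h t by (simp add: m_assoc inv_mult_group)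
    then show "h \<otimes> d \<otimes> inv h \<in> ?D" using h g(1) by auto
  qed
  then show "generate G ?D \<lhd> G"
    using D unfolding conj_invariant_def by (intro normal_generateI) auto
  have "p_subgroup G p {\<one>}" unfolding p_subgroup_def using triv_subgroup by (intro conjI exI[of _ 0]) auto
  moreover have "conj_invariant G (carrier G) {\<one>}" unfolding conj_invariant_def by simp
  moreover have "p_subgroup G p (generate G ({a, b} \<union> {\<one>}))" if ab: "a \<in> ?D" "b \<in> ?D" for a b
  proof -
    have "generate G ({a, b} \<union> {\<one>}) = generate G {a, b}" using ab D by (intro generate_Un_one) blast
    then show ?thesis using pairs[OF ab] by simp
  qed
  ultimately have "baer_suzuki_data G p (carrier G) {\<one>} ?D"
    using is_group p subgroup_self fin D conj_D
    unfolding baer_suzuki_data_def baer_suzuki_data_axioms_def by blast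
  then have "p_subgroup G p (generate G (?D \<union> {\<one>}))" by (rule baer_suzuki)
  then show "p_subgroup G p (generate G ?D)" using generate_Un_one[OF D] by simp
qed

lemma (in group) baer_suzuki_conjugates:
  assumes p: "Factorial_Ring.prime p" and fin: "finite (carrier G)" and t: "t \<in> carrier G" "t \<noteq> \<one>"
    and no_normal: "\<And>N. N \<lhd> G \<Longrightarrow> p_subgroup G p N \<Longrightarrow> N = {\<one>}"
  obtains h1 h2 where "h1 \<in> carrier G" "h2 \<in> carrier G"
    "\<not> p_subgroup G p (generate G {h1 \<otimes> t \<otimes> inv h1, h2 \<otimes> t \<otimes> inv h2})"
proof -
  let ?class = "(\<lambda>h. h \<otimes> t \<otimes> inv h) ` carrier G"
  have "\<exists>a\<in>?class. \<exists>b\<in>?class. \<not> p_subgroup G p (generate G {a, b})"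
  proof (rule ccontr)
    assume "\<not> ?thesis"
    then have "generate G ?class = {\<one>}"
      using baer_suzuki_conjugacy_class[OF p fin t(1)] no_normal by blast
    moreover have "t \<in> ?class" using t(1) by (auto intro!: image_eqI[of _ _ \<one>])
    ultimately show False using subset_generate[of ?class] t(2) by blast
  qed
  then show ?thesis using that by blast
qed

section \<open>Fixed points of involutions\<close>

context group
begin

lemma involution_inv: "a \<in> carrier G \<Longrightarrow> a \<otimes> a = \<one> \<Longrightarrow> inv a = a"
  by (simp add: inv_equality)

lemma conj_involution:
  assumes "h \<in> carrier G" "t \<in> carrier G" "t \<otimes> t = \<one>"
  shows "(h \<otimes> t \<otimes> inv h) \<otimes> (h \<otimes> t \<otimes> inv h) = \<one>"
proof -
  have "(h \<otimes> t \<otimes> inv h) \<otimes> (h \<otimes> t \<otimes> inv h) = h \<otimes> (t \<otimes> t) \<otimes> inv h"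
    using assms(1,2) by (simp add: m_assoc)
  then show ?thesis using assms by simp
qed

lemma involutions_conj_product:
  assumes "a \<in> carrier G" "b \<in> carrier G" "a \<otimes> a = \<one>" "b \<otimes> b = \<one>"
  shows "a \<otimes> (a \<otimes> b) \<otimes> inv a = inv (a \<otimes> b)"
  using assms by (simp add: involution_inv inv_mult_group m_assoc[symmetric])

(* <a, b> = <a> <a b>, and a inverts a b. *)
lemma involutions_generate_2_subgroup:
  assumes a: "a \<in> carrier G" "a \<otimes> a = \<one>" and b: "b \<in> carrier G" "b \<otimes> b = \<one>"
    and c: "(a \<otimes> b) [^] ((2::nat) ^ m) = \<one>"
  shows "p_subgroup G 2 (generate G {a, b})"
proof -
  define B where "B = generate G {a \<otimes> b}"
  have "a [^] ((2::nat) ^ 1) = \<one>" using a by (simp add: numeral_2_eq_2)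
  then have A: "p_subgroup G 2 (generate G {a})"
    using a(1) by (intro p_subgroup_generate_singleton[where m = 1]) auto
  have B: "p_subgroup G 2 B" unfolding B_def using a(1) b(1) c
    by (intro p_subgroup_generate_singleton) auto
  then have B_sub: "subgroup B G" "finite B" unfolding p_subgroup_def by auto
  have "a \<otimes> b \<in> B" unfolding B_def by (rule generate.incl) simp
  then have "a \<otimes> (a \<otimes> b) \<otimes> inv a \<in> B"
    using subgroup.m_inv_closed[OF B_sub(1)] involutions_conj_product[OF a(1) b(1) a(2) b(2)] by simp
  then have "a \<otimes> x \<otimes> inv a \<in> B" if "x \<in> B" for x
    using conj_generate_in_subgroup[of "{a \<otimes> b}" B a x] a(1) b(1) B_sub(1) that
    unfolding B_def by simp
  then have "a \<in> {g \<in> carrier G. conj_invariant G {g} B}"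
    using a(1) unfolding conj_invariant_def by blast
  then have "generate G {a} \<subseteq> {g \<in> carrier G. conj_invariant G {g} B}"
    using subgroup_normalizing_elements[OF subgroup_self B_sub] by (intro generate_subgroup_incl) auto
  then have "conj_invariant G (generate G {a}) B" unfolding conj_invariant_def by blast
  then have AB: "p_subgroup G 2 (generate G (generate G {a} \<union> B))"
    using A B by (intro p_subgroup_generate_Un) auto
  have "a \<in> generate G (generate G {a} \<union> B)" "a \<otimes> b \<in> generate G (generate G {a} \<union> B)"
    using subset_generate[of "{a}"] subset_generate[of "{a \<otimes> b}"]
      subset_generate[of "generate G {a} \<union> B"] unfolding B_def by blast+
  then have "a \<otimes> (a \<otimes> b) \<in> generate G (generate G {a} \<union> B)" by (rule generate.eng)
  moreover have "a \<otimes> (a \<otimes> b) = b" using a b by (simp add: m_assoc[symmetric])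
  ultimately have "{a, b} \<subseteq> generate G (generate G {a} \<union> B)"
    using \<open>a \<in> generate G (generate G {a} \<union> B)\<close> by simp
  then show ?thesis by (rule p_subgroup_generate_subset[OF two_is_prime_nat AB])
qed

lemma involutions_conj_pow:
  assumes "a \<in> carrier G" "b \<in> carrier G" "a \<otimes> a = \<one>" "b \<otimes> b = \<one>"
  shows "inv ((a \<otimes> b) [^] (j::nat)) \<otimes> a \<otimes> (a \<otimes> b) [^] j = a \<otimes> (a \<otimes> b) [^] (2 * j)"
proof -
  have c: "a \<otimes> b \<in> carrier G" using assms by simp
  have "a \<otimes> (a \<otimes> b) [^] j \<otimes> inv a = (a \<otimes> (a \<otimes> b) \<otimes> inv a) [^] j"
    by (rule conj_nat_pow[OF assms(1) c])
  also have "\<dots> = inv ((a \<otimes> b) [^] j)"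
    using involutions_conj_product[OF assms] nat_pow_inv[OF c] by simp
  finally have "inv ((a \<otimes> b) [^] j) \<otimes> a \<otimes> (a \<otimes> b) [^] j
      = a \<otimes> (a \<otimes> b) [^] j \<otimes> inv a \<otimes> a \<otimes> (a \<otimes> b) [^] j"
    by (simp only:)
  also have "\<dots> = a \<otimes> (a \<otimes> b) [^] (2 * j)"
    using assms(1) c by (simp add: m_assoc nat_pow_mult mult_2)
  finally show ?thesis .
qed

lemma exists_involution_power:
  assumes "g \<in> carrier G" "g \<noteq> \<one>" "g [^] ((2::nat) ^ k) = \<one>"
  obtains n :: nat where "g [^] n \<noteq> \<one>" "g [^] n \<otimes> g [^] n = \<one>"
proof -
  have "ord g dvd 2 ^ k" using pow_eq_id assms(1,3) by blast
  then obtain i where i: "ord g = 2 ^ i" using divides_primepow_nat[OF two_is_prime_nat] by blast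
  then have "i \<noteq> 0" using ord_eq_1[OF assms(1)] assms(2) by auto
  have "\<not> ord g dvd 2 ^ (i - 1)"
    using i \<open>i \<noteq> 0\<close> by (simp add: dvd_power_iff_le)
  then have "g [^] ((2::nat) ^ (i - 1)) \<noteq> \<one>" using pow_eq_id assms(1) by blast
  moreover have "g [^] ((2::nat) ^ (i - 1)) \<otimes> g [^] ((2::nat) ^ (i - 1)) = g [^] ord g"
    using assms(1) \<open>i \<noteq> 0\<close> i by (simp add: nat_pow_mult power_eq_if mult_2[symmetric])
  ultimately show ?thesis using that assms(1) by simp
qed

end

context group_action
begin

lemma card_invariants_conj_le:
  assumes "finite E" "h \<in> carrier G" "g \<in> carrier G"
  shows "card (invariants E \<phi> g) \<le> card (invariants E \<phi> (h \<otimes> g \<otimes> inv h))"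
proof (rule card_inj_on_le)
  show "inj_on (\<phi> h) (invariants E \<phi> g)"
    using inj_prop[OF assms(2)] unfolding invariants_def by (rule inj_on_subset) blast
  show "\<phi> h ` invariants E \<phi> g \<subseteq> invariants E \<phi> (h \<otimes> g \<otimes> inv h)"
  proof
    fix y assume "y \<in> \<phi> h ` invariants E \<phi> g"
    then obtain x where x: "x \<in> E" "\<phi> g x = x" "y = \<phi> h x" unfolding invariants_def by blast
    have "y \<in> E" using element_image[OF assms(2) x(1) x(3)[symmetric]] .
    have "\<phi> (h \<otimes> g \<otimes> inv h) y = \<phi> h (\<phi> g (\<phi> (inv h) y))"
      using composition_rule[OF \<open>y \<in> E\<close>] composition_rule[OF x(1)] assms(2,3)
      by (simp add: orbit_sym_aux[OF assms(2) x(1) x(3)[symmetric]])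
    also have "\<dots> = y" using orbit_sym_aux[OF assms(2) x(1) x(3)[symmetric]] x(2,3) by simp
    finally have "\<phi> (h \<otimes> g \<otimes> inv h) y = y" .
    then show "y \<in> invariants E \<phi> (h \<otimes> g \<otimes> inv h)" using \<open>y \<in> E\<close> unfolding invariants_def by blast
  qed
  show "finite (invariants E \<phi> (h \<otimes> g \<otimes> inv h))" using assms(1) unfolding invariants_def by simp
qed

lemma card_invariants_conj:
  assumes "finite E" "h \<in> carrier G" "g \<in> carrier G"
  shows "card (invariants E \<phi> (h \<otimes> g \<otimes> inv h)) = card (invariants E \<phi> g)"
proof (rule antisym)
  have "inv h \<otimes> (h \<otimes> g \<otimes> inv h) \<otimes> inv (inv h) = g" using assms(2,3) by (simp add: m_assoc)
  then show "card (invariants E \<phi> (h \<otimes> g \<otimes> inv h)) \<le> card (invariants E \<phi> g)"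
    using card_invariants_conj_le[OF assms(1) inv_closed[OF assms(2)], of "h \<otimes> g \<otimes> inv h"] assms
    by simp
qed (rule card_invariants_conj_le[OF assms])

lemma invariants_subset_pow:
  assumes "g \<in> carrier G"
  shows "invariants E \<phi> g \<subseteq> invariants E \<phi> (g [^] (n::nat))"
proof
  fix x assume x: "x \<in> invariants E \<phi> g"
  have "\<phi> (g [^] n) x = x" for n :: nat
  proof (induction n)
    case 0
    have "\<phi> \<one> x = x" using x unfolding invariants_def by (simp add: id_eq_one[symmetric])
    then show ?case by simp
  next
    case (Suc n)
    have "x \<in> E" "\<phi> g x = x" using x unfolding invariants_def by auto
    then show ?case using Suc composition_rule[OF \<open>x \<in> E\<close> nat_pow_closed[OF assms] assms] by simp
  qed
  then show "x \<in> invariants E \<phi> (g [^] n)" using x unfolding invariants_def by blast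
qed

lemma invariants_Int_mult_subset:
  assumes "u \<in> carrier G" "w \<in> carrier G"
  shows "invariants E \<phi> u \<inter> invariants E \<phi> (u \<otimes> w) \<subseteq> invariants E \<phi> w"
proof
  fix x assume "x \<in> invariants E \<phi> u \<inter> invariants E \<phi> (u \<otimes> w)"
  then have x: "x \<in> E" "\<phi> u x = x" "\<phi> (u \<otimes> w) x = x" unfolding invariants_def by auto
  then have "\<phi> u (\<phi> w x) = \<phi> u x" using composition_rule[OF x(1) assms] by simp
  then have "\<phi> w x = x"
    using inj_onD[OF inj_prop[OF assms(1)]] element_image[OF assms(2) x(1) refl] x(1) by blast
  then show "x \<in> invariants E \<phi> w" using x(1) unfolding invariants_def by blast
qed

lemma stabilizer_2_group_pow_eq_one:
  assumes "p_subgroup G 2 (stabilizer G \<phi> x)" "g \<in> carrier G" "\<phi> g x = x"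
  obtains k where "g [^] ((2::nat) ^ k) = \<one>"
proof -
  obtain k where "card (stabilizer G \<phi> x) = 2 ^ k" "subgroup (stabilizer G \<phi> x) G"
    using assms(1) unfolding p_subgroup_def by blast
  moreover have "g \<in> stabilizer G \<phi> x" using assms(2,3) unfolding stabilizer_def by blast
  ultimately show ?thesis using that subgroup_pow_card_eq_one by metis
qed

lemma invariants_two_power_empty:
  assumes stab: "\<And>x. x \<in> E \<Longrightarrow> p_subgroup G 2 (stabilizer G \<phi> x)"
    and a: "a \<in> carrier G" "a \<otimes> a = \<one>" and b: "b \<in> carrier G" "b \<otimes> b = \<one>"
    and not_2_group: "\<not> p_subgroup G 2 (generate G {a, b})"
  shows "invariants E \<phi> ((a \<otimes> b) [^] ((2::nat) ^ Suc j)) = {}"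
proof (rule ccontr)
  have c: "a \<otimes> b \<in> carrier G" using a b by simp
  assume "invariants E \<phi> ((a \<otimes> b) [^] ((2::nat) ^ Suc j)) \<noteq> {}"
  then obtain x where "x \<in> E" "\<phi> ((a \<otimes> b) [^] ((2::nat) ^ Suc j)) x = x" unfolding invariants_def by blast
  then obtain k where "((a \<otimes> b) [^] ((2::nat) ^ Suc j)) [^] ((2::nat) ^ k) = \<one>"
    using stab c by (metis nat_pow_closed stabilizer_2_group_pow_eq_one)
  then have "(a \<otimes> b) [^] ((2::nat) ^ (Suc j + k)) = \<one>"
    using c by (simp add: nat_pow_pow power_add mult.assoc)
  then show False using involutions_generate_2_subgroup[OF a b] not_2_group by blast
qed

lemma three_card_invariants_involution_le:
  assumes fin: "finite E" and stab: "\<And>x. x \<in> E \<Longrightarrow> p_subgroup G 2 (stabilizer G \<phi> x)"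
    and a: "a \<in> carrier G" "a \<otimes> a = \<one>" and b: "b \<in> carrier G" "b \<otimes> b = \<one>"
    and not_2_group: "\<not> p_subgroup G 2 (generate G {a, b})"
  shows "3 * card (invariants E \<phi> a) \<le> card E"
proof -
  define c where "c = a \<otimes> b"
  have c: "c \<in> carrier G" unfolding c_def using a b by simp
  have fixfree: "invariants E \<phi> (c [^] ((2::nat) ^ Suc j)) = {}" for j
    unfolding c_def using stab a b not_2_group by (rule invariants_two_power_empty)
  define u where "u n = a \<otimes> c [^] ((2::nat) * n)" for n :: nat
  have u_carrier: "u n \<in> carrier G" for n unfolding u_def using a c by simp
  have card_u: "card (invariants E \<phi> (u n)) = card (invariants E \<phi> a)" for n
  proof -
    have "u n = inv (c [^] n) \<otimes> a \<otimes> inv (inv (c [^] n))"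
      unfolding u_def c_def using involutions_conj_pow[OF a(1) b(1) a(2) b(2)] c c_def by simp
    then show ?thesis using card_invariants_conj[OF fin inv_closed[OF nat_pow_closed[OF c]] a(1)] by simp
  qed
  have disjoint: "invariants E \<phi> (u n) \<inter> invariants E \<phi> (u n \<otimes> c [^] ((2::nat) ^ Suc j)) = {}" for n j
    using invariants_Int_mult_subset[OF u_carrier nat_pow_closed[OF c]] fixfree by blast
  have "u 0 \<otimes> c [^] ((2::nat) ^ Suc 0) = u 1" "u 1 \<otimes> c [^] ((2::nat) ^ Suc 0) = u 2"
    "u 0 \<otimes> c [^] ((2::nat) ^ Suc 1) = u 2"
    unfolding u_def using a c by (simp_all add: m_assoc nat_pow_mult)
  then have "invariants E \<phi> (u 0) \<inter> invariants E \<phi> (u 1) = {}"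
    "invariants E \<phi> (u 1) \<inter> invariants E \<phi> (u 2) = {}"
    "invariants E \<phi> (u 0) \<inter> invariants E \<phi> (u 2) = {}"
    using disjoint[of 0 0] disjoint[of 1 0] disjoint[of 0 1] by simp_all
  moreover have "finite (invariants E \<phi> (u n))" for n using fin unfolding invariants_def by simp
  ultimately have "card (invariants E \<phi> (u 0) \<union> invariants E \<phi> (u 1) \<union> invariants E \<phi> (u 2))
      = 3 * card (invariants E \<phi> a)"
    using card_u by (simp add: card_Un_disjoint Int_Un_distrib2)
  moreover have "invariants E \<phi> (u 0) \<union> invariants E \<phi> (u 1) \<union> invariants E \<phi> (u 2) \<subseteq> E"
    unfolding invariants_def by blast
  ultimately show ?thesis using fin by (metis card_mono)
qed

lemma three_card_invariants_le:
  assumes fin_G: "finite (carrier G)" and fin: "finite E"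
    and stab: "\<And>x. x \<in> E \<Longrightarrow> p_subgroup G 2 (stabilizer G \<phi> x)"
    and no_normal: "\<And>N. N \<lhd> G \<Longrightarrow> p_subgroup G 2 N \<Longrightarrow> N = {\<one>}"
    and g: "g \<in> carrier G" "g \<noteq> \<one>"
  shows "3 * card (invariants E \<phi> g) \<le> card E"
proof (cases "invariants E \<phi> g = {}")
  case False
  then obtain x where "x \<in> E" "\<phi> g x = x" unfolding invariants_def by blast
  then obtain k where "g [^] ((2::nat) ^ k) = \<one>" using stabilizer_2_group_pow_eq_one stab g(1) by metis
  then obtain n :: nat where t: "g [^] n \<noteq> \<one>" "g [^] n \<otimes> g [^] n = \<one>"
    using exists_involution_power g by metis
  define t where "t = g [^] n"
  have "t \<in> carrier G" unfolding t_def using g(1) by simp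
  obtain h1 h2 where h: "h1 \<in> carrier G" "h2 \<in> carrier G"
    and not_2_group: "\<not> p_subgroup G 2 (generate G {h1 \<otimes> t \<otimes> inv h1, h2 \<otimes> t \<otimes> inv h2})"
    using baer_suzuki_conjugates[OF two_is_prime_nat fin_G \<open>t \<in> carrier G\<close>] t(1) no_normal
    unfolding t_def by blast
  have "card (invariants E \<phi> g) \<le> card (invariants E \<phi> t)"
    unfolding t_def using fin invariants_subset_pow[OF g(1)] unfolding invariants_def
    by (intro card_mono) auto
  also have "\<dots> = card (invariants E \<phi> (h1 \<otimes> t \<otimes> inv h1))"
    using card_invariants_conj[OF fin h(1) \<open>t \<in> carrier G\<close>] by simp
  finally show ?thesis
    using three_card_invariants_involution_le[OF fin stab _ conj_involution _ conj_involution not_2_group]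
      h \<open>t \<in> carrier G\<close> t(2) unfolding t_def by simp
qed simp

end

lemma perm_grp_action:
  assumes "is_perm_group \<Omega> H"
  shows "group_action (perm_grp \<Omega> H) \<Omega> (\<lambda>g. g)"
proof -
  have sub: "subgroup H (BijGroup \<Omega>)" using assms unfolding is_perm_group_def .
  then have "group (perm_grp \<Omega> H)"
    unfolding perm_grp_def by (rule group.subgroup_imp_group[OF group_BijGroup])
  moreover have "(\<lambda>g. g) \<in> hom (perm_grp \<Omega> H) (BijGroup \<Omega>)"
    using subgroup.subset[OF sub] unfolding hom_def perm_grp_def by auto
  ultimately show ?thesis
    unfolding group_action_def group_hom_def group_hom_axioms_def using group_BijGroup by blast
qed

lemma finite_perm_group:
  assumes "is_perm_group \<Omega> H" "finite \<Omega>"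
  shows "finite H"
proof -
  have "H \<subseteq> Bij \<Omega>"
    using subgroup.subset[OF assms(1)[unfolded is_perm_group_def]] unfolding BijGroup_def by simp
  also have "\<dots> \<subseteq> \<Omega> \<rightarrow>\<^sub>E \<Omega>"
  proof
    fix f assume "f \<in> Bij \<Omega>"
    then show "f \<in> \<Omega> \<rightarrow>\<^sub>E \<Omega>" using Bij_imp_extensional[of f] Bij_imp_funcset[of f] by (simp add: PiE_def)
  qed
  finally show ?thesis by (rule finite_subset) (intro finite_PiE assms(2))
qed

lemma stabilizer_perm_grp: "stabilizer (perm_grp \<Omega> H) (\<lambda>g. g) x = stabiliser H x"
  unfolding stabilizer_def stabiliser_def perm_grp_def by simp

lemma card_supp:
  assumes "finite \<Omega>"
  shows "card (supp \<Omega> g) = card \<Omega> - card (invariants \<Omega> (\<lambda>g. g) g)"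
proof -
  have sub: "supp \<Omega> g = \<Omega> - invariants \<Omega> (\<lambda>g. g) g" "invariants \<Omega> (\<lambda>g. g) g \<subseteq> \<Omega>"
    unfolding supp_def invariants_def by auto
  then show ?thesis using card_Diff_subset[OF finite_subset[OF sub(2) assms] sub(2)] by simp
qed

lemma (in group) normal_2_subgroup_trivial:
  assumes "O2 G = {\<one>}" "N \<lhd> G" "p_subgroup G 2 N"
  shows "N = {\<one>}"
proof -
  have "N \<subseteq> \<Union>{N. N \<lhd> G \<and> p_subgroup G 2 N}" using assms(2,3) by blast
  also have "\<dots> \<subseteq> O2 G" unfolding O2_def by (rule subset_generate)
  finally show ?thesis using assms(1) subgroup.one_closed[OF normal_imp_subgroup[OF assms(2)]] by blast
qed

theorem theorem1p1:
  fixes \<Omega> :: "'a set" and H :: "('a \<Rightarrow> 'a) set"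
  assumes "finite \<Omega>"
    and "is_perm_group \<Omega> H"
    and "transitive_on \<Omega> H"
    and "O2 (perm_grp \<Omega> H) = {\<one>\<^bsub>perm_grp \<Omega> H\<^esub>}"
    and "\<forall>\<omega>\<in>\<Omega>. p_subgroup (perm_grp \<Omega> H) 2 (stabiliser H \<omega>)"
  shows "\<forall>g\<in>H. g \<noteq> \<one>\<^bsub>perm_grp \<Omega> H\<^esub> \<longrightarrow> 3 * card (supp \<Omega> g) \<ge> 2 * card \<Omega>"
proof (intro ballI impI)
  fix g assume g: "g \<in> H" "g \<noteq> \<one>\<^bsub>perm_grp \<Omega> H\<^esub>"
  interpret group_action "perm_grp \<Omega> H" \<Omega> "\<lambda>g. g" using assms(2) by (rule perm_grp_action)
  have carrier: "carrier (perm_grp \<Omega> H) = H" unfolding perm_grp_def by simp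
  have "3 * card (invariants \<Omega> (\<lambda>g. g) g) \<le> card \<Omega>"
  proof (rule three_card_invariants_le)
    show "finite (carrier (perm_grp \<Omega> H))" using finite_perm_group[OF assms(2,1)] carrier by simp
    show "p_subgroup (perm_grp \<Omega> H) 2 (stabilizer (perm_grp \<Omega> H) (\<lambda>g. g) x)" if "x \<in> \<Omega>" for x
      unfolding stabilizer_perm_grp using assms(5) that by blast
    show "N = {\<one>\<^bsub>perm_grp \<Omega> H\<^esub>}" if "N \<lhd> perm_grp \<Omega> H" "p_subgroup (perm_grp \<Omega> H) 2 N" for N
      using normal_2_subgroup_trivial[OF assms(4) that] .
  qed (use assms(1) g carrier in auto)
  then show "3 * card (supp \<Omega> g) \<ge> 2 * card \<Omega>" using card_supp[OF assms(1)] by simp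
qed

end
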